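(* Let $\xi>0$ and $\alpha\in\mathbb{R}$, and consider the planar vector field $f_0(y,z;\alpha)$ on $\mathbb{R}^2$ given by \[ \dot y = e^{z}-1,\qquad \dot z = \xi + e^{z}\left(\alpha z - \xi y - \xi\right). \] Then $f_0$ has a unique fixed point, namely $(y,z)=(0,0)$, and this fixed point undergoes a degenerate Hopf bifurcation at $\alpha=\xi$. In particular, for $\alpha=\xi$ the vector field is Hamiltonian (up to a positive factor) and can be written as \[ f_0(y,z;\xi)=g(y,z)\,J\,\nabla H(y,z), \] where \[ g(y,z)=\frac{e^{\xi y+z}}{\xi},\qquad H(y,z)=-e^{-\xi y}\left(\xi y-\xi z+\xi+1-\xi e^{-z}\right)+1,\qquad J=\begin{bmatrix}0&1\\-1&0\end{bmatrix}. \]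
   Context: This planar system is the reduced (slow) problem, restricted to the critical manifold $C_0=\{z=-x-\xi y\}$, of the dimensionless spring-block earthquake model $\dot x=-e^{z}(x+(1+\alpha)z)$, $\dot y=e^{z}-1$, $\varepsilon\dot z=-e^{-z}(y+(x+z)/\xi)$ with $\varepsilon=0$. *)

theory Defs
  imports "HOL-Analysis.Analysis"
begin

definition f0 :: "real \<Rightarrow> real \<Rightarrow> real \<times> real \<Rightarrow> real \<times> real" where
  "f0 \<xi> \<alpha> p = (case p of (y, z) \<Rightarrow>
      (exp z - 1, \<xi> + exp z * (\<alpha> * z - \<xi> * y - \<xi>)))"

definition gfac :: "real \<Rightarrow> real \<times> real \<Rightarrow> real" where
  "gfac \<xi> p = (case p of (y, z) \<Rightarrow> exp (\<xi> * y + z) / \<xi>)"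

definition Ham :: "real \<Rightarrow> real \<times> real \<Rightarrow> real" where
  "Ham \<xi> p = (case p of (y, z) \<Rightarrow>
      - exp (- \<xi> * y) * (\<xi> * y - \<xi> * z + \<xi> + 1 - \<xi> * exp (- z)) + 1)"

definition Jsym :: "real \<times> real \<Rightarrow> real \<times> real" where
  "Jsym v = (case v of (a, b) \<Rightarrow> (b, - a))"

definition jac0 :: "real \<Rightarrow> real \<Rightarrow> real \<times> real \<Rightarrow> real \<times> real" where
  "jac0 \<xi> \<alpha> = frechet_derivative (f0 \<xi> \<alpha>) (at (0, 0))"

text \<open>Complex eigenvalues of a linear map L on R^2 (eigenvalues of its matrix
  [[a11,a12],[a21,a22]] with a11 = fst (L(1,0)), a12 = fst (L(0,1)), etc.,
  considered over the complex numbers).\<close>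
definition cx_eigenvalue :: "(real \<times> real \<Rightarrow> real \<times> real) \<Rightarrow> complex \<Rightarrow> bool" where
  "cx_eigenvalue L c \<longleftrightarrow>
     (\<exists>a b :: complex. (a, b) \<noteq> (0, 0) \<and>
        of_real (fst (L (1, 0))) * a + of_real (fst (L (0, 1))) * b = c * a \<and>
        of_real (snd (L (1, 0))) * a + of_real (snd (L (0, 1))) * b = c * b)"

end

theory Submission
  imports Defs
begin

text \<open>The Jacobian of the field at the origin is the companion matrix of
  c^2 - (\<alpha> - \<xi>) c + \<xi>, so for \<alpha> near \<xi> its eigenvalues are the complex pair
  (\<alpha> - \<xi>)/2 +- i sqrt (\<xi> - (\<alpha> - \<xi>)^2/4), whose real part crosses zero with
  speed 1/2. At \<alpha> = \<xi> the field is g J grad H, and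
  H(y,z) = exp(-\<xi> y) ((exp(\<xi> y) - 1 - \<xi> y) + \<xi> (exp(-z) - 1 + z)) is a positive
  multiple of a sum of two convexity gaps of exp, which vanishes only at the origin;
  hence the origin is a strict minimum of H and the Hopf point is a nonlinear centre.\<close>

lemma f0_eq_origin_iff:
  assumes "\<xi> \<noteq> 0"
  shows "f0 \<xi> \<alpha> p = (0, 0) \<longleftrightarrow> p = (0, 0)"
proof
  assume "f0 \<xi> \<alpha> p = (0, 0)"
  then obtain y z where p: "p = (y, z)"
    and "exp z = 1" and "\<xi> + exp z * (\<alpha> * z - \<xi> * y - \<xi>) = 0"
    by (cases p) (auto simp: f0_def)
  then show "p = (0, 0)" using assms by simp
qed (simp add: f0_def)

lemma f0_has_derivative_origin:
  "(f0 \<xi> \<alpha> has_derivative (\<lambda>h. (snd h, - \<xi> * fst h + (\<alpha> - \<xi>) * snd h))) (at (0, 0))"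
proof -
  have f0_eq: "f0 \<xi> \<alpha> = (\<lambda>p. (exp (snd p) - 1, \<xi> + exp (snd p) * (\<alpha> * snd p - \<xi> * fst p - \<xi>)))"
    by (auto simp: fun_eq_iff f0_def)
  show ?thesis
    unfolding f0_eq by (auto intro!: derivative_eq_intros simp: fun_eq_iff algebra_simps)
qed

lemma jac0_eq: "jac0 \<xi> \<alpha> = (\<lambda>h. (snd h, - \<xi> * fst h + (\<alpha> - \<xi>) * snd h))"
  unfolding jac0_def using frechet_derivative_at[OF f0_has_derivative_origin] by simp

lemma cx_eigenvalue_companion_iff:
  "cx_eigenvalue (\<lambda>h. (snd h, - q * fst h + t * snd h)) c \<longleftrightarrow>
     c * c - of_real t * c + of_real q = 0"
proof
  assume "cx_eigenvalue (\<lambda>h. (snd h, - q * fst h + t * snd h)) c"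
  then obtain a b :: complex where "(a, b) \<noteq> (0, 0)" and "b = c * a"
    and "- of_real q * a + of_real t * b = c * b"
    by (auto simp: cx_eigenvalue_def)
  then have "a \<noteq> 0" and "a * (c * c - of_real t * c + of_real q) = 0"
    by (auto simp: algebra_simps)
  then show "c * c - of_real t * c + of_real q = 0" by simp
next
  assume "c * c - of_real t * c + of_real q = 0"
  then show "cx_eigenvalue (\<lambda>h. (snd h, - q * fst h + t * snd h)) c"
    unfolding cx_eigenvalue_def
    by (intro exI[of _ 1] exI[of _ c]) (simp add: algebra_simps eq_neg_iff_add_eq_0)
qed

lemma complex_roots_of_real_quadratic:
  fixes t q :: real
  assumes "t\<^sup>2 < 4 * q"
  shows "{c. c * c - of_real t * c + of_real q = 0} =
    {Complex (t / 2) (sqrt (q - t\<^sup>2 / 4)), Complex (t / 2) (- sqrt (q - t\<^sup>2 / 4))}"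
proof -
  define w where "w = sqrt (q - t\<^sup>2 / 4)"
  have "w * w = q - t\<^sup>2 / 4"
    unfolding w_def using assms by (simp flip: real_sqrt_mult)
  then have "c * c - of_real t * c + of_real q = (c - Complex (t / 2) w) * (c - Complex (t / 2) (- w))"
    for c
    by (simp add: complex_eq_iff algebra_simps power2_eq_square)
  then show ?thesis unfolding w_def[symmetric] by auto
qed

lemma jac0_eigenvalues:
  assumes "(\<alpha> - \<xi>)\<^sup>2 < 4 * \<xi>"
  shows "{c. cx_eigenvalue (jac0 \<xi> \<alpha>) c} =
    {Complex ((\<alpha> - \<xi>) / 2) (sqrt (\<xi> - (\<alpha> - \<xi>)\<^sup>2 / 4)),
     Complex ((\<alpha> - \<xi>) / 2) (- sqrt (\<xi> - (\<alpha> - \<xi>)\<^sup>2 / 4))}"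
  unfolding jac0_eq cx_eigenvalue_companion_iff
  by (rule complex_roots_of_real_quadratic) fact

lemma Ham_has_gradient:
  "GDERIV (Ham \<xi>) (y, z) :>
     (\<xi> * exp (- \<xi> * y) * (\<xi> * y - \<xi> * z + \<xi> - \<xi> * exp (- z)),
      \<xi> * exp (- \<xi> * y) * (1 - exp (- z)))"
proof -
  have Ham_eq: "Ham \<xi> = (\<lambda>p. - exp (- \<xi> * fst p) * (\<xi> * fst p - \<xi> * snd p + \<xi> + 1 - \<xi> * exp (- snd p)) + 1)"
    by (auto simp: fun_eq_iff Ham_def)
  show ?thesis
    unfolding gderiv_def Ham_eq
    by (auto intro!: derivative_eq_intros simp: fun_eq_iff algebra_simps inner_prod_def)
qed

lemma f0_Hamiltonian:
  assumes "\<xi> \<noteq> 0"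
  shows "\<exists>D. GDERIV (Ham \<xi>) p :> D \<and> f0 \<xi> \<xi> p = gfac \<xi> p *\<^sub>R Jsym D"
proof -
  obtain y z where p: "p = (y, z)" by (cases p)
  have exps: "exp (\<xi> * y + z) * exp (- (\<xi> * y)) = exp z" "exp z * exp (- z) = 1"
    by (simp_all flip: exp_add)
  show ?thesis
    unfolding p
    by (intro exI conjI, rule Ham_has_gradient)
      (use exps assms in \<open>simp add: f0_def gfac_def Jsym_def algebra_simps\<close>)
qed

lemma Ham_eq_convexity_gaps:
  "Ham \<xi> (y, z) = exp (- \<xi> * y) * ((exp (\<xi> * y) - 1 - \<xi> * y) + \<xi> * (exp (- z) - 1 + z))"
  by (simp add: Ham_def algebra_simps flip: exp_add)

lemma Ham_pos:
  assumes "\<xi> > 0" and "p \<noteq> (0, 0)"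
  shows "Ham \<xi> p > 0"
proof -
  obtain y z where p: "p = (y, z)" by (cases p)
  have gap_y: "exp (\<xi> * y) - 1 - \<xi> * y \<ge> 0" and gap_z: "exp (- z) - 1 + z \<ge> 0"
    using exp_ge_add_one_self[of "\<xi> * y"] exp_minus_ge[of z] by linarith+
  have "exp (\<xi> * y) - 1 - \<xi> * y > 0 \<or> exp (- z) - 1 + z > 0"
    using exp_minus_greater[of "- (\<xi> * y)"] exp_minus_greater[of z] assms p by auto
  then have "(exp (\<xi> * y) - 1 - \<xi> * y) + \<xi> * (exp (- z) - 1 + z) > 0"
    using gap_y gap_z assms(1) by (smt (verit) mult_pos_pos mult_nonneg_nonneg)
  then show ?thesis unfolding p Ham_eq_convexity_gaps by simp
qed

theorem proposition1:
  fixes \<xi> :: real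
  assumes "\<xi> > 0"
  shows
    \<comment> \<open>unique fixed point (0,0), for every alpha\<close>
    "(\<forall>\<alpha>. {p. f0 \<xi> \<alpha> p = (0, 0)} = {(0, 0)})
     \<comment> \<open>Hopf bifurcation at alpha = xi: f0 differentiable at the origin,
        a complex pair of eigenvalues mu(alpha) +- i omega(alpha) of the Jacobian,
        crossing the imaginary axis at alpha = xi with nonzero speed\<close>
     \<and> (\<forall>\<alpha>. f0 \<xi> \<alpha> differentiable (at (0, 0)))
     \<and> (\<exists>\<delta> > 0. \<exists>\<mu> \<omega> :: real \<Rightarrow> real. \<exists>d.
          (\<mu> has_real_derivative d) (at \<xi>) \<and> d \<noteq> 0 \<and> \<mu> \<xi> = 0 \<and>
          (\<forall>\<alpha>. \<bar>\<alpha> - \<xi>\<bar> < \<delta> \<longrightarrow> \<omega> \<alpha> > 0 \<and>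
             {c. cx_eigenvalue (jac0 \<xi> \<alpha>) c} =
               {Complex (\<mu> \<alpha>) (\<omega> \<alpha>), Complex (\<mu> \<alpha>) (- \<omega> \<alpha>)}))
     \<comment> \<open>degeneracy: at alpha = xi the field is Hamiltonian up to the positive factor g\<close>
     \<and> (\<forall>p. gfac \<xi> p > 0)
     \<and> (\<forall>p. \<exists>D. GDERIV (Ham \<xi>) p :> D \<and> f0 \<xi> \<xi> p = gfac \<xi> p *\<^sub>R Jsym D)
     \<comment> \<open>and the origin is a nonlinear centre: H has a strict local minimum there\<close>
     \<and> (\<exists>\<epsilon> > 0. \<forall>p. p \<noteq> (0, 0) \<and> norm p < \<epsilon> \<longrightarrow> Ham \<xi> p > Ham \<xi> (0, 0))"
proof -
  define \<mu> where "\<mu> \<alpha> = (\<alpha> - \<xi>) / 2" for \<alpha>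
  define \<omega> where "\<omega> \<alpha> = sqrt (\<xi> - (\<alpha> - \<xi>)\<^sup>2 / 4)" for \<alpha>
  have hopf: "\<exists>\<delta> > 0. \<exists>\<mu> \<omega> :: real \<Rightarrow> real. \<exists>d.
      (\<mu> has_real_derivative d) (at \<xi>) \<and> d \<noteq> 0 \<and> \<mu> \<xi> = 0 \<and>
      (\<forall>\<alpha>. \<bar>\<alpha> - \<xi>\<bar> < \<delta> \<longrightarrow> \<omega> \<alpha> > 0 \<and>
         {c. cx_eigenvalue (jac0 \<xi> \<alpha>) c} = {Complex (\<mu> \<alpha>) (\<omega> \<alpha>), Complex (\<mu> \<alpha>) (- \<omega> \<alpha>)})"
  proof (intro exI conjI allI impI)
    show "sqrt \<xi> > 0" using assms by simp
    show "(\<mu> has_real_derivative 1 / 2) (at \<xi>)"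
      unfolding \<mu>_def[abs_def] by (auto intro!: derivative_eq_intros)
    fix \<alpha> assume "\<bar>\<alpha> - \<xi>\<bar> < sqrt \<xi>"
    then have "(\<alpha> - \<xi>)\<^sup>2 < \<xi>" by (metis real_sqrt_abs real_sqrt_less_iff)
    then show "\<omega> \<alpha> > 0"
      and "{c. cx_eigenvalue (jac0 \<xi> \<alpha>) c} = {Complex (\<mu> \<alpha>) (\<omega> \<alpha>), Complex (\<mu> \<alpha>) (- \<omega> \<alpha>)}"
      using assms by (simp_all add: \<mu>_def \<omega>_def jac0_eigenvalues)
  qed (simp_all add: \<mu>_def)
  have "Ham \<xi> (0, 0) = 0" by (simp add: Ham_def)
  then have centre: "\<exists>\<epsilon> > 0. \<forall>p. p \<noteq> (0, 0) \<and> norm p < \<epsilon> \<longrightarrow> Ham \<xi> p > Ham \<xi> (0, 0)"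
    using Ham_pos[OF assms] by (intro exI[of _ 1]) auto
  show ?thesis
  proof (intro conjI allI)
    show "{p. f0 \<xi> \<alpha> p = (0, 0)} = {(0, 0)}" for \<alpha>
      using f0_eq_origin_iff assms by auto
    show "f0 \<xi> \<alpha> differentiable (at (0, 0))" for \<alpha>
      using f0_has_derivative_origin by (auto simp: differentiable_def)
    show "gfac \<xi> p > 0" for p
      using assms by (simp add: gfac_def split: prod.split)
    show "\<exists>D. GDERIV (Ham \<xi>) p :> D \<and> f0 \<xi> \<xi> p = gfac \<xi> p *\<^sub>R Jsym D" for p
      using f0_Hamiltonian assms by simp
  qed (fact hopf centre)+
qed

end
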